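(* Let $c\in\mathbb{C}$, $r\ge0$, and suppose that the interior of $\overline{B}(c,r)=\{c'\in\mathbb{C}:|c'-c|\le r\}$ contains a superattracting parameter $\tilde c$. If $L=\overline{\bigcup_{g\in G_{c,r}}\{g(0)\}}$ is bounded in $\mathbb{C}$, then $L$ is a planar minimal set of $G_{c,r}$.
   Context: $f_c(z)=z^2+c$, extended to $\widehat{\mathbb{C}}$ by $f_c(\infty)=\infty$. A parameter $\tilde c$ is superattracting if $f_{\tilde c}^{\circ p}(0)=0$ for some $p\in\mathbb{N}$. $G_{c,r}$ is the semigroup under composition generated by $\{f_{c'}:c'\in\overline{B}(c,r)\}$. A minimal set of $G_{c,r}$ is a minimal element, with respect to inclusion, of the family of non-empty compact $L\subset\widehat{\mathbb{C}}$ with $g(L)\subset L$ for all $g\in G_{c,r}$; it is planar if $\infty\notin L$. *)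

theory Defs
  imports "HOL-Analysis.Analysis"
begin

text \<open>The quadratic family f_c(z) = z^2 + c (on the finite plane; f_c(infinity) = infinity
  plays no role for planar sets).\<close>
definition fc :: "complex \<Rightarrow> complex \<Rightarrow> complex" where
  "fc c z = z\<^sup>2 + c"

definition superattracting :: "complex \<Rightarrow> bool" where
  "superattracting c \<longleftrightarrow> (\<exists>p::nat. p \<ge> 1 \<and> (fc c ^^ p) 0 = 0)"

inductive_set gen_semigroup :: "('a \<Rightarrow> 'a) set \<Rightarrow> ('a \<Rightarrow> 'a) set" for F where
  base: "f \<in> F \<Longrightarrow> f \<in> gen_semigroup F"
| comp: "f \<in> gen_semigroup F \<Longrightarrow> g \<in> gen_semigroup F \<Longrightarrow> f \<circ> g \<in> gen_semigroup F"

definition G :: "complex \<Rightarrow> real \<Rightarrow> (complex \<Rightarrow> complex) set" where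
  "G c r = gen_semigroup (fc ` cball c r)"

definition forward_invariant :: "('a \<Rightarrow> 'a) set \<Rightarrow> 'a set \<Rightarrow> bool" where
  "forward_invariant S K \<longleftrightarrow> (\<forall>g\<in>S. g ` K \<subseteq> K)"

text \<open>Any candidate K \<subseteq> L also avoids infinity,
  and compactness in the sphere of a subset of C is compactness in C.\<close>
definition planar_minimal_set :: "(complex \<Rightarrow> complex) set \<Rightarrow> complex set \<Rightarrow> bool" where
  "planar_minimal_set S L \<longleftrightarrow>
     L \<noteq> {} \<and> compact L \<and> forward_invariant S L \<and>
     (\<forall>K. K \<noteq> {} \<and> compact K \<and> forward_invariant S K \<and> K \<subseteq> L \<longrightarrow> K = L)"

end

theory Submission
  imports Defs "HOL-Complex_Analysis.Complex_Analysis"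
begin

text \<open>
  The closure L of the orbit of 0 is compact and forward invariant, so minimality amounts to
  showing that every nonempty compact invariant K \<subseteq> L contains 0. Invariance under all
  f_c' with |c' - c| \<le> r puts a disc of radius r into K, hence a point g(0) of the orbit,
  g = f_t1 \<circ> ... \<circ> f_tn. Shrinking the parameters towards the superattracting parameter ct,
  t_i \<mapsto> ct + \<lambda> (t_i - ct), turns g(0) into a holomorphic function of \<lambda>; it still lies in K
  for some real \<lambda> slightly below 1, and at \<lambda> = 0 it lies on the cycle of 0 under f_ct.
  Following it by iterates of that cycle gives a uniformly bounded sequence of holomorphic
  functions that tends to 0 near \<lambda> = 0, since the cycle is superattracting. By Montel's theorem
  and the identity theorem a subsequence tends to 0 at every admissible \<lambda>, and its values at
  the chosen real \<lambda> lie in K.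
\<close>

fun fc_word :: "complex list \<Rightarrow> complex \<Rightarrow> complex" where
  "fc_word [] z = z"
| "fc_word (t # ts) z = fc t (fc_word ts z)"

lemma fc_word_append: "fc_word (xs @ ys) z = fc_word xs (fc_word ys z)"
  by (induction xs) auto

lemma fc_word_replicate: "fc_word (replicate m t) = fc t ^^ m"
  by (induction m) auto

lemma gen_semigroup_fc_eq_words:
  "gen_semigroup (fc ` A) = {fc_word cs | cs. cs \<noteq> [] \<and> set cs \<subseteq> A}"
proof (intro equalityI subsetI)
  fix g assume "g \<in> gen_semigroup (fc ` A)"
  then show "g \<in> {fc_word cs | cs. cs \<noteq> [] \<and> set cs \<subseteq> A}"
  proof induction
    case (base f)
    then obtain t where "t \<in> A" "f = fc t" by auto
    then show ?case by (intro CollectI exI[of _ "[t]"]) (auto simp: fun_eq_iff)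
  next
    case (comp f g)
    then obtain cs ds where "cs \<noteq> []" "set cs \<subseteq> A" "f = fc_word cs"
      and "set ds \<subseteq> A" "g = fc_word ds" by blast
    then show ?case by (intro CollectI exI[of _ "cs @ ds"]) (auto simp: fun_eq_iff fc_word_append)
  qed
next
  fix g assume "g \<in> {fc_word cs | cs. cs \<noteq> [] \<and> set cs \<subseteq> A}"
  then obtain cs where "cs \<noteq> []" "set cs \<subseteq> A" "g = fc_word cs" by blast
  moreover have "fc_word cs \<in> gen_semigroup (fc ` A)" if "cs \<noteq> []" "set cs \<subseteq> A" for cs
    using that
  proof (induction cs)
    case (Cons t ts)
    have ft: "fc t \<in> gen_semigroup (fc ` A)" using Cons.prems by (auto intro: gen_semigroup.base)
    show ?case
    proof (cases "ts = []")
      case True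
      then have "fc_word (t # ts) = fc t" by (simp add: fun_eq_iff)
      with ft show ?thesis by simp
    next
      case False
      then have "fc_word ts \<in> gen_semigroup (fc ` A)" using Cons by simp
      moreover have "fc_word (t # ts) = fc t \<circ> fc_word ts" by (simp add: fun_eq_iff)
      ultimately show ?thesis using ft gen_semigroup.comp by metis
    qed
  qed simp
  ultimately show "g \<in> gen_semigroup (fc ` A)" by blast
qed

lemma fc_word_mem_orbit:
  assumes "cs \<noteq> []" "set cs \<subseteq> cball c r"
  shows "fc_word cs z \<in> {g z | g. g \<in> G c r}"
  using assms unfolding G_def gen_semigroup_fc_eq_words by blast

lemma continuous_on_gen_semigroup:
  assumes "\<And>f. f \<in> F \<Longrightarrow> continuous_on UNIV f" and "g \<in> gen_semigroup F"
  shows "continuous_on UNIV g"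
  using assms(2) by induction (auto intro: assms(1) continuous_on_compose2[of UNIV])

lemma forward_invariant_closure_orbit:
  fixes F :: "('a::metric_space \<Rightarrow> 'a) set"
  assumes "\<And>f. f \<in> F \<Longrightarrow> continuous_on UNIV f"
  shows "forward_invariant (gen_semigroup F) (closure {g x | g. g \<in> gen_semigroup F})"
  unfolding forward_invariant_def
proof
  fix f assume f: "f \<in> gen_semigroup F"
  define orbit where "orbit = {g x | g. g \<in> gen_semigroup F}"
  have "f ` orbit \<subseteq> orbit"
    using f unfolding orbit_def by clarsimp (metis comp_apply gen_semigroup.comp)
  then have "f ` orbit \<subseteq> closure orbit" using closure_subset by blast
  then show "f ` closure orbit \<subseteq> closure orbit"
    using continuous_on_gen_semigroup[OF assms f]
    by (intro image_closure_subset) (auto intro: continuous_on_subset)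
qed

lemma planar_minimal_set_closure_orbit:
  fixes F :: "(complex \<Rightarrow> complex) set" and x :: complex
  defines "L \<equiv> closure {g x | g. g \<in> gen_semigroup F}"
  assumes "\<And>f. f \<in> F \<Longrightarrow> continuous_on UNIV f" and "F \<noteq> {}" and "bounded L"
    and "\<And>K. K \<noteq> {} \<Longrightarrow> compact K \<Longrightarrow> forward_invariant (gen_semigroup F) K \<Longrightarrow> K \<subseteq> L \<Longrightarrow> x \<in> K"
  shows "planar_minimal_set (gen_semigroup F) L"
  unfolding planar_minimal_set_def
proof (intro conjI allI impI)
  obtain f where "f \<in> F" using assms(3) by blast
  then show "L \<noteq> {}" unfolding L_def using closure_subset by (fast intro: gen_semigroup.base)
  show "compact L" using assms(4) by (simp add: L_def compact_eq_bounded_closed)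
  show "forward_invariant (gen_semigroup F) L"
    unfolding L_def by (rule forward_invariant_closure_orbit[OF assms(2)])
  fix K assume K: "K \<noteq> {} \<and> compact K \<and> forward_invariant (gen_semigroup F) K \<and> K \<subseteq> L"
  then have "{g x | g. g \<in> gen_semigroup F} \<subseteq> K"
    using assms(5) by (auto simp: forward_invariant_def)
  then have "L \<subseteq> K" unfolding L_def using K by (simp add: closure_minimal compact_imp_closed)
  with K show "K = L" by blast
qed

definition homothety :: "complex \<Rightarrow> complex \<Rightarrow> complex \<Rightarrow> complex" where
  "homothety a w t = a + w * (t - a)"

lemma homothety_center [simp]: "homothety a w a = a"
  and homothety_one [simp]: "homothety a 1 t = t"
  and homothety_zero [simp]: "homothety a 0 t = a"
  by (simp_all add: homothety_def)

definition homothety_ratios :: "complex \<Rightarrow> complex list \<Rightarrow> complex set \<Rightarrow> complex set" where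
  "homothety_ratios a cs U = {w. \<forall>t\<in>set cs. homothety a w t \<in> U}"

lemma homothety_ratios_eq_INT:
  "homothety_ratios a cs U = (\<Inter>t\<in>set cs. (\<lambda>w. homothety a w t) -` U)"
  by (auto simp: homothety_ratios_def)

lemma open_homothety_ratios:
  assumes "open U"
  shows "open (homothety_ratios a cs U)"
  unfolding homothety_ratios_eq_INT using assms
  by (intro open_INT ballI continuous_open_vimage) (auto simp: homothety_def intro!: continuous_intros)

lemma homothety_convex_combination:
  assumes "u + v = 1"
  shows "homothety a (u *\<^sub>R x + v *\<^sub>R y) t = u *\<^sub>R homothety a x t + v *\<^sub>R homothety a y t"
proof -
  have "complex_of_real u + complex_of_real v = 1"
    using assms by (metis of_real_1 of_real_add)
  then show ?thesis
    by (simp add: homothety_def scaleR_conv_of_real algebra_simps) (metis distrib_left mult_1_right)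
qed

lemma convex_homothety_ratios:
  assumes "convex U"
  shows "convex (homothety_ratios a cs U)"
proof (rule convexI)
  fix x y and u v :: real
  assume "x \<in> homothety_ratios a cs U" "y \<in> homothety_ratios a cs U" "0 \<le> u" "0 \<le> v" "u + v = 1"
  then show "u *\<^sub>R x + v *\<^sub>R y \<in> homothety_ratios a cs U"
    using convexD[OF assms] by (simp add: homothety_ratios_def homothety_convex_combination)
qed

lemma zero_mem_homothety_ratios: "a \<in> U \<Longrightarrow> 0 \<in> homothety_ratios a cs U"
  by (simp add: homothety_ratios_def)

lemma of_real_mem_homothety_ratios:
  assumes "convex U" "a \<in> interior U" "set cs \<subseteq> closure U" "0 \<le> s" "s < 1"
  shows "of_real s \<in> homothety_ratios a cs (interior U)"
  unfolding homothety_ratios_def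
proof (intro CollectI ballI)
  fix t assume t: "t \<in> set cs"
  show "homothety a (of_real s) t \<in> interior U"
  proof (cases "s = 0 \<or> t = a")
    case True
    then show ?thesis using assms(2) by auto
  next
    case False
    then have "homothety a (of_real s) t \<in> open_segment a t"
      using assms(4,5) unfolding in_segment
      by (auto simp: homothety_def scaleR_conv_of_real algebra_simps intro!: exI[of _ s])
    then show ?thesis using in_interior_closure_convex_segment[OF assms(1,2)] t assms(3) by blast
  qed
qed

lemma holomorphic_on_fc_word_homothety:
  assumes "f holomorphic_on S"
  shows "(\<lambda>w. fc_word (map (homothety a w) cs) (f w)) holomorphic_on S"
  by (induction cs) (auto simp: fc_def homothety_def intro!: holomorphic_intros assms)

lemma field_differentiable_linear_bound_at_zero:
  fixes H :: "complex \<Rightarrow> complex"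
  assumes "H field_differentiable at 0" "H 0 = 0"
  obtains A \<eta> where "A > 0" "\<eta> > 0" "\<And>y. norm y < \<eta> \<Longrightarrow> norm (H y) \<le> A * norm y"
proof -
  obtain d where "(H has_field_derivative d) (at 0)"
    using assms(1) by (auto simp: field_differentiable_def)
  then have "((\<lambda>y. H y / y) \<longlongrightarrow> d) (at 0)"
    using assms(2) by (simp add: has_field_derivative_iff)
  then have "\<forall>\<^sub>F y in at 0. norm (H y / y) < norm d + 1"
    by (intro order_tendstoD(2)[OF tendsto_norm]) auto
  then obtain \<eta> where "\<eta> > 0" and \<eta>: "\<And>y. y \<noteq> 0 \<Longrightarrow> dist y 0 < \<eta> \<Longrightarrow> norm (H y / y) < norm d + 1"
    by (auto simp: eventually_at)
  have "norm (H y) \<le> (norm d + 1) * norm y" if "norm y < \<eta>" for y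
  proof (cases "y = 0")
    case False
    then have "norm (H y) = norm (H y / y) * norm y" by (simp add: norm_divide)
    also have "\<dots> \<le> (norm d + 1) * norm y"
      using \<eta>[OF False] that by (intro mult_right_mono) auto
    finally show ?thesis .
  qed (simp add: assms(2))
  moreover have "norm d + 1 > 0" by (simp add: add_nonneg_pos)
  ultimately show thesis using that \<open>\<eta> > 0\<close> by blast
qed

lemma superattracting_cycle_halves_near_zero:
  assumes "p \<ge> 1" "(fc a ^^ p) 0 = 0"
  obtains \<delta> where "\<delta> > 0" "\<And>w. norm w < \<delta> \<Longrightarrow> norm ((fc a ^^ p) w) \<le> norm w / 2"
proof -
  define H where "H u = (fc a ^^ (p - 1)) (u + a)" for u
  have F_eq: "(fc a ^^ p) w = H (w\<^sup>2)" for w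
  proof -
    have "p = Suc (p - 1)" using assms(1) by simp
    then have "fc a ^^ p = (fc a ^^ (p - 1)) \<circ> fc a" by (metis funpow_Suc_right)
    then show ?thesis by (simp add: H_def fc_def add.commute)
  qed
  have "(\<lambda>u. fc_word (map (homothety a u) (replicate (p - 1) a)) (u + a)) holomorphic_on UNIV"
    by (intro holomorphic_on_fc_word_homothety holomorphic_intros)
  then have "H holomorphic_on UNIV" by (simp add: H_def[abs_def] fc_word_replicate)
  then have "H field_differentiable at 0"
    by (simp add: holomorphic_on_def field_differentiable_at_within)
  moreover have "H 0 = 0" using F_eq[of 0] assms(2) by simp
  ultimately obtain A \<eta> where "A > 0" "\<eta> > 0" and A: "\<And>y. norm y < \<eta> \<Longrightarrow> norm (H y) \<le> A * norm y"
    using field_differentiable_linear_bound_at_zero by metis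
  define \<delta> where "\<delta> = min 1 (min \<eta> (1 / (2 * A)))"
  have "norm ((fc a ^^ p) w) \<le> norm w / 2" if "norm w < \<delta>" for w
  proof -
    have w: "norm w < 1" "norm w < \<eta>" "A * norm w \<le> 1 / 2"
      using that \<open>A > 0\<close> by (auto simp: \<delta>_def field_simps)
    have "norm (w\<^sup>2) \<le> norm w"
      using w(1) by (simp add: norm_power power2_eq_square norm_mult mult_left_le_one_le)
    then have "norm ((fc a ^^ p) w) \<le> A * norm w * norm w"
      using A[of "w\<^sup>2"] w(2) by (simp add: F_eq power2_eq_square norm_mult mult.assoc)
    also have "\<dots> \<le> 1 / 2 * norm w"
      using w(3) by (rule mult_right_mono) simp
    finally show ?thesis by simp
  qed
  moreover have "\<delta> > 0" using \<open>A > 0\<close> \<open>\<eta> > 0\<close> by (simp add: \<delta>_def)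
  ultimately show thesis using that by blast
qed

lemma funpow_tendsto_zero_if_halving:
  fixes F :: "'a::real_normed_vector \<Rightarrow> 'a"
  assumes halve: "\<And>v. norm v < \<delta> \<Longrightarrow> norm (F v) \<le> norm v / 2" and w: "norm w < \<delta>"
  shows "(\<lambda>k. (F ^^ k) w) \<longlonglongrightarrow> 0"
proof -
  have bound: "norm ((F ^^ k) w) \<le> norm w / 2 ^ k" for k
  proof (induction k)
    case (Suc k)
    have "norm w / 2 ^ k \<le> norm w / 1" by (intro divide_left_mono) auto
    then have "norm ((F ^^ k) w) < \<delta>" using Suc w by linarith
    then have "norm ((F ^^ Suc k) w) \<le> norm ((F ^^ k) w) / 2" using halve by simp
    also have "\<dots> \<le> norm w / 2 ^ Suc k" using Suc by (simp add: field_simps)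
    finally show ?case .
  qed simp
  show ?thesis
    by (rule Lim_null_comparison[OF _ LIMSEQ_divide_realpow_zero[of 2 "norm w"]]) (use bound in auto)
qed

lemma isCont_obtain_funpow_tendsto_zero:
  fixes \<theta> :: "'a::metric_space \<Rightarrow> 'b::real_normed_vector" and F :: "'b \<Rightarrow> 'b"
  assumes "isCont \<theta> x" "\<theta> x = 0" "\<delta> > 0" and halve: "\<And>v. norm v < \<delta> \<Longrightarrow> norm (F v) \<le> norm v / 2"
  obtains e where "e > 0" "\<And>v. dist v x < e \<Longrightarrow> (\<lambda>k. (F ^^ k) (\<theta> v)) \<longlonglongrightarrow> 0"
proof -
  obtain e where "e > 0" and e: "\<And>v. dist v x < e \<Longrightarrow> dist (\<theta> v) 0 < \<delta>"
    using assms(1-3) unfolding continuous_at_eps_delta by metis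
  have "(\<lambda>k. (F ^^ k) (\<theta> v)) \<longlonglongrightarrow> 0" if "dist v x < e" for v
    using funpow_tendsto_zero_if_halving[OF halve] e[OF that] by simp
  with \<open>e > 0\<close> show thesis using that by blast
qed

lemma Montel_zero_in_closure_range:
  fixes \<psi> :: "nat \<Rightarrow> complex \<Rightarrow> complex"
  assumes \<Omega>: "open \<Omega>" "connected \<Omega>"
    and holo: "\<And>k. \<psi> k holomorphic_on \<Omega>" and bound: "\<And>k v. v \<in> \<Omega> \<Longrightarrow> norm (\<psi> k v) \<le> B"
    and ball: "e > 0" "ball v\<^sub>0 e \<subseteq> \<Omega>" and vanish: "\<And>v. v \<in> ball v\<^sub>0 e \<Longrightarrow> (\<lambda>k. \<psi> k v) \<longlonglongrightarrow> 0"
    and w: "w \<in> \<Omega>"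
  shows "0 \<in> closure (range (\<lambda>k. \<psi> k w))"
proof -
  define \<H> where "\<H> = {h. h holomorphic_on \<Omega> \<and> (\<forall>v\<in>\<Omega>. norm (h v) \<le> B)}"
  have "\<And>h. h \<in> \<H> \<Longrightarrow> h holomorphic_on \<Omega>" by (simp add: \<H>_def)
  moreover have "\<And>K. compact K \<Longrightarrow> K \<subseteq> \<Omega> \<Longrightarrow> \<exists>B'. \<forall>h\<in>\<H>. \<forall>z\<in>K. norm (h z) \<le> B'"
    unfolding \<H>_def by blast
  moreover have "range \<psi> \<subseteq> \<H>" using holo bound by (auto simp: \<H>_def)
  ultimately obtain h \<rho> where h: "h holomorphic_on \<Omega>" "strict_mono (\<rho> :: nat \<Rightarrow> nat)"
      "\<And>v. v \<in> \<Omega> \<Longrightarrow> (\<lambda>j. \<psi> (\<rho> j) v) \<longlonglongrightarrow> h v"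
    using Montel[OF \<Omega>(1)] by metis
  have h_ball: "h v = 0" if "v \<in> ball v\<^sub>0 e" for v
  proof (rule LIMSEQ_unique)
    show "(\<lambda>j. \<psi> (\<rho> j) v) \<longlonglongrightarrow> h v" using h(3) that ball(2) by blast
    show "(\<lambda>j. \<psi> (\<rho> j) v) \<longlonglongrightarrow> 0"
      using LIMSEQ_subseq_LIMSEQ[OF vanish[OF that] h(2)] by (simp add: o_def)
  qed
  have "h w = 0"
    using analytic_continuation_open[OF open_ball \<Omega>(1) _ \<Omega>(2) ball(2) h(1) holomorphic_on_const h_ball w]
      ball(1) by simp
  then have "(\<lambda>j. \<psi> (\<rho> j) w) \<longlonglongrightarrow> 0" using h(3)[OF w] by simp
  then show ?thesis unfolding closure_sequential by (intro exI[of _ "\<lambda>j. \<psi> (\<rho> j) w"]) auto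
qed

lemma superattracting_zero_in_closure_iterates:
  assumes ct: "ct \<in> ball c r" and "superattracting ct"
    and bdd: "bounded {g 0 | g. g \<in> G c r}"
    and cs: "cs \<noteq> []" "set cs \<subseteq> cball c r"
    and w: "w \<in> homothety_ratios ct cs (ball c r)"
  shows "0 \<in> closure (range (\<lambda>m. (fc ct ^^ m) (fc_word (map (homothety ct w) cs) 0)))"
proof -
  obtain p where p: "p \<ge> 1" "(fc ct ^^ p) 0 = 0" using assms(2) superattracting_def by auto
  define n where "n = length cs"
  \<comment> \<open>at \<open>v = 0\<close> the word below is \<open>q + n = n * p\<close> copies of \<open>ct\<close>, so \<open>\<psi> k 0 = 0\<close>\<close>
  define q where "q = p * n - n"
  define \<Omega> where "\<Omega> = homothety_ratios ct cs (ball c r)"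
  define \<psi> where "\<psi> k v = fc_word (map (homothety ct v) (replicate (p * k + q) ct @ cs)) 0" for k v
  have \<psi>_iterate: "\<psi> k v = (fc ct ^^ (p * k + q)) (fc_word (map (homothety ct v) cs) 0)" for k v
    by (simp add: \<psi>_def fc_word_append fc_word_replicate)
  have \<psi>_cycle: "\<psi> k v = ((fc ct ^^ p) ^^ k) (\<psi> 0 v)" for k v
    by (simp add: \<psi>_iterate funpow_mult funpow_add mult.commute)
  have "map (homothety ct 0) cs = replicate n ct" unfolding n_def by (induction cs) auto
  then have "\<psi> 0 0 = (fc ct ^^ (n * p)) 0"
    using p(1) by (simp add: \<psi>_def q_def fc_word_replicate mult.commute flip: replicate_add)
  also have "\<dots> = 0" using funpow_mod_eq[OF p(2), of "n * p"] by simp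
  finally have \<psi>_0: "\<psi> 0 0 = 0" .
  have holo: "\<psi> k holomorphic_on UNIV" for k
    unfolding \<psi>_def by (intro holomorphic_on_fc_word_homothety holomorphic_intros)
  obtain B where B: "\<forall>x\<in>{g 0 | g. g \<in> G c r}. norm x \<le> B" using bdd unfolding bounded_iff by blast
  have bound: "norm (\<psi> k v) \<le> B" if "v \<in> \<Omega>" for k v
    unfolding \<psi>_def using that ct cs(1)
    by (intro B[rule_format] fc_word_mem_orbit) (auto simp: \<Omega>_def homothety_ratios_def)
  obtain \<delta> where \<delta>: "\<delta> > 0" "\<And>v. norm v < \<delta> \<Longrightarrow> norm ((fc ct ^^ p) v) \<le> norm v / 2"
    using superattracting_cycle_halves_near_zero[OF p] by blast
  have cont: "isCont (\<psi> 0) 0"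
    using holomorphic_on_imp_continuous_on[OF holo] continuous_on_eq_continuous_at open_UNIV by blast
  obtain e\<^sub>1 where "e\<^sub>1 > 0" and e\<^sub>1: "\<And>v. dist v 0 < e\<^sub>1 \<Longrightarrow> (\<lambda>k. \<psi> k v) \<longlonglongrightarrow> 0"
    using isCont_obtain_funpow_tendsto_zero[OF cont \<psi>_0 \<delta>] unfolding \<psi>_cycle[symmetric] by metis
  have "open \<Omega>" "connected \<Omega>" "0 \<in> \<Omega>"
    using ct by (simp_all add: \<Omega>_def open_homothety_ratios convex_connected convex_homothety_ratios
        zero_mem_homothety_ratios)
  then obtain e\<^sub>2 where "e\<^sub>2 > 0" "ball 0 e\<^sub>2 \<subseteq> \<Omega>" using open_contains_ball_eq by blast
  define e where "e = min e\<^sub>1 e\<^sub>2"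
  have e: "e > 0" "ball 0 e \<subseteq> \<Omega>"
    using \<open>e\<^sub>1 > 0\<close> \<open>e\<^sub>2 > 0\<close> \<open>ball 0 e\<^sub>2 \<subseteq> \<Omega>\<close> by (auto simp: e_def)
  have vanish: "(\<lambda>k. \<psi> k v) \<longlonglongrightarrow> 0" if "v \<in> ball 0 e" for v
    using e\<^sub>1 that by (simp add: e_def dist_commute)
  have "0 \<in> closure (range (\<lambda>k. \<psi> k w))"
    using Montel_zero_in_closure_range[of \<Omega> \<psi> B e 0 w, OF \<open>open \<Omega>\<close> \<open>connected \<Omega>\<close>
        holomorphic_on_subset[OF holo subset_UNIV] bound e vanish] w
    by (simp add: \<Omega>_def)
  moreover have "range (\<lambda>k. \<psi> k w) \<subseteq> range (\<lambda>m. (fc ct ^^ m) (fc_word (map (homothety ct w) cs) 0))"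
    by (auto simp: \<psi>_iterate)
  ultimately show ?thesis using closure_mono by blast
qed

lemma forward_invariant_G_fc:
  assumes "forward_invariant (G c r) K" "t \<in> cball c r" "x \<in> K"
  shows "fc t x \<in> K"
proof -
  have "fc t \<in> G c r" using assms(2) by (auto simp: G_def intro: gen_semigroup.base)
  then show ?thesis using assms(1,3) by (auto simp: forward_invariant_def)
qed

lemma forward_invariant_G_cball:
  assumes "forward_invariant (G c r) K" "z \<in> K"
  shows "cball (z\<^sup>2 + c) r \<subseteq> K"
proof
  fix y assume "y \<in> cball (z\<^sup>2 + c) r"
  then have "y - z\<^sup>2 \<in> cball c r" by (auto simp: dist_norm algebra_simps)
  then show "y \<in> K" using forward_invariant_G_fc[OF assms(1) _ assms(2)] by (force simp: fc_def)
qed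

lemma isCont_obtain_of_real_below_one:
  fixes \<Phi> :: "complex \<Rightarrow> 'a::topological_space"
  assumes "isCont \<Phi> 1" "open U" "\<Phi> 1 \<in> U"
  obtains s :: real where "0 < s" "s < 1" "\<Phi> (of_real s) \<in> U"
proof -
  have "((\<lambda>s. \<Phi> (of_real s)) \<longlongrightarrow> \<Phi> 1) (at_left 1)"
    using assms(1) by (intro isCont_tendsto_compose[of _ \<Phi>]) (auto intro!: tendsto_eq_intros)
  then have "\<forall>\<^sub>F s in at_left 1. \<Phi> (of_real s) \<in> U"
    using assms(2,3) by (rule topological_tendstoD)
  then have "\<forall>\<^sub>F s in at_left (1::real). s \<in> {0<..<1} \<and> \<Phi> (of_real s) \<in> U"
    by (intro eventually_conj eventually_at_left_real) auto
  then show thesis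
    using eventually_happens'[OF trivial_limit_at_left_real] that by auto
qed

lemma zero_mem_invariant_subset:
  fixes c ct :: complex and r :: real and K :: "complex set"
  defines "L \<equiv> closure {g 0 | g. g \<in> G c r}"
  assumes ct: "ct \<in> ball c r" "superattracting ct" and "bounded L"
    and K: "K \<noteq> {}" "compact K" "forward_invariant (G c r) K" "K \<subseteq> L"
  shows "0 \<in> K"
proof -
  obtain z where "z \<in> K" using K(1) by blast
  define U where "U = ball (z\<^sup>2 + c) r"
  have "U \<subseteq> K" using forward_invariant_G_cball[OF K(3) \<open>z \<in> K\<close>] by (auto simp: U_def)
  moreover have "z\<^sup>2 + c \<in> U" using ct(1) by (simp add: U_def le_less_trans[OF zero_le_dist])
  ultimately have "U \<inter> closure {g 0 | g. g \<in> G c r} \<noteq> {}" using K(4) by (auto simp: L_def)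
  then have "U \<inter> {g 0 | g. g \<in> G c r} \<noteq> {}"
    using open_Int_closure_eq_empty[of U] by (simp add: U_def)
  then obtain cs where cs: "cs \<noteq> []" "set cs \<subseteq> cball c r" "fc_word cs 0 \<in> U"
    by (auto simp: G_def gen_semigroup_fc_eq_words)
  define \<Phi> where "\<Phi> v = fc_word (map (homothety ct v) cs) 0" for v
  have "\<Phi> holomorphic_on UNIV"
    unfolding \<Phi>_def[abs_def] by (intro holomorphic_on_fc_word_homothety holomorphic_intros)
  then have "isCont \<Phi> 1"
    using holomorphic_on_imp_continuous_on continuous_on_eq_continuous_at open_UNIV by blast
  moreover have "\<Phi> 1 \<in> U" using cs(3) by (simp add: \<Phi>_def map_idI)
  moreover have "open U" by (simp add: U_def)
  ultimately obtain s where s: "0 < s" "s < 1" "\<Phi> (of_real s) \<in> U"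
    using isCont_obtain_of_real_below_one by metis
  have "of_real s \<in> homothety_ratios ct cs (ball c r)"
    using of_real_mem_homothety_ratios[of "cball c r" ct cs s] ct(1) cs(2) s by simp
  then have "0 \<in> closure (range (\<lambda>m. (fc ct ^^ m) (\<Phi> (of_real s))))"
    unfolding \<Phi>_def using superattracting_zero_in_closure_iterates[OF ct _ cs(1,2)]
      bounded_subset[OF \<open>bounded L\<close>] closure_subset by (auto simp: L_def)
  moreover have "(fc ct ^^ m) x \<in> K" if "x \<in> K" for m x
    using that ct(1) by (induction m) (auto intro: forward_invariant_G_fc[OF K(3)])
  then have "range (\<lambda>m. (fc ct ^^ m) (\<Phi> (of_real s))) \<subseteq> K" using s(3) \<open>U \<subseteq> K\<close> by auto
  ultimately show "0 \<in> K" using closure_minimal compact_imp_closed[OF K(2)] by blast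
qed

theorem lemma4p5:
  fixes c ct :: complex and r :: real
  assumes "r \<ge> 0"
    and "ct \<in> interior (cball c r)"
    and "superattracting ct"
    and "bounded (closure {g 0 | g. g \<in> G c r})"
  shows "planar_minimal_set (G c r) (closure {g 0 | g. g \<in> G c r})"
  unfolding G_def
proof (rule planar_minimal_set_closure_orbit)
  show "continuous_on UNIV f" if "f \<in> fc ` cball c r" for f
    using that by (auto simp: fc_def intro!: continuous_intros)
  show "fc ` cball c r \<noteq> {}" using assms(1) by simp
  show "bounded (closure {g 0 | g. g \<in> gen_semigroup (fc ` cball c r)})"
    using assms(4) by (simp add: G_def)
  show "0 \<in> K" if "K \<noteq> {}" "compact K" "forward_invariant (gen_semigroup (fc ` cball c r)) K"
    "K \<subseteq> closure {g 0 | g. g \<in> gen_semigroup (fc ` cball c r)}" for K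
    using zero_mem_invariant_subset[of ct c r K] assms(2-4) that by (simp add: G_def)
qed

end
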